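(* Let $(W,S)$ be a finitely generated Coxeter system and $v\in W$. Then $$\sum_{x\le v}\mu(e,x)\,t^{|S(x)|}=(1-t)^{|\mathrm{Des}(v)|},$$ where the sum is over all $x\in W$ with $x\le v$ and $\mu$ is the Möbius function of $(W,\le)$.
   Context: $(W,S)$ is a finitely generated Coxeter system with length function $\ell$ and identity $e$. For $w\in W$, $S(w)\subseteq S$ is the set of simple reflections appearing in a (any) reduced expression of $w$, and $\mathrm{Des}(w)=\{s\in S:\ell(ws)<\ell(w)\}$. For $I\subseteq S$, $W_I$ is the parabolic subgroup generated by $I$, $X_I=\{u\in W:\ell(us)>\ell(u)\ \forall s\in I\}$, and every $w\in W$ factors uniquely as $w=w^Iw_I$ with $w^I\in X_I$, $w_I\in W_I$ (parabolic components along $I$). The partial order on $W$: $u\le v$ iff $v_{S(u)}=u$ (so $e\le x$ for all $x$). *)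

theory Defs
  imports "HOL-Algebra.Generated_Groups" "HOL-Computational_Algebra.Polynomial"
begin

definition word_prod :: "('a, 'b) monoid_scheme \<Rightarrow> 'a list \<Rightarrow> 'a" where
  "word_prod G ws = foldr (\<lambda>a b. a \<otimes>\<^bsub>G\<^esub> b) ws \<one>\<^bsub>G\<^esub>"

definition coxeter_relators :: "('a, 'b) monoid_scheme \<Rightarrow> 'a set \<Rightarrow> 'a list set" where
  "coxeter_relators G S =
     {[s, s] | s. s \<in> S} \<union>
     {concat (replicate m [s, t]) | s t m. s \<in> S \<and> t \<in> S \<and> 0 < m \<and>
        (s \<otimes>\<^bsub>G\<^esub> t) [^]\<^bsub>G\<^esub> m = \<one>\<^bsub>G\<^esub>}"

definition relator_step :: "('a, 'b) monoid_scheme \<Rightarrow> 'a set \<Rightarrow> ('a list \<times> 'a list) set" where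
  "relator_step G S = {(xs @ r @ ys, xs @ ys) | xs r ys. r \<in> coxeter_relators G S}"

text \<open>(W,S) is a finitely generated Coxeter system: S is a finite generating set of
  involutions, and the Coxeter relations present W, i.e. every word in S that evaluates
  to the identity is equal to the empty word modulo the relators.\<close>
definition coxeter_system :: "('a, 'b) monoid_scheme \<Rightarrow> 'a set \<Rightarrow> bool" where
  "coxeter_system G S \<longleftrightarrow>
     group G \<and> finite S \<and> S \<subseteq> carrier G \<and> \<one>\<^bsub>G\<^esub> \<notin> S \<and>
     (\<forall>s\<in>S. s \<otimes>\<^bsub>G\<^esub> s = \<one>\<^bsub>G\<^esub>) \<and>
     generate G S = carrier G \<and>
     (\<forall>ws \<in> lists S. word_prod G ws = \<one>\<^bsub>G\<^esub> \<longrightarrow>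
        (ws, []) \<in> (relator_step G S \<union> (relator_step G S)\<inverse>)\<^sup>*)"

definition cox_length :: "('a, 'b) monoid_scheme \<Rightarrow> 'a set \<Rightarrow> 'a \<Rightarrow> nat" where
  "cox_length G S w = (LEAST n. \<exists>ws \<in> lists S. length ws = n \<and> word_prod G ws = w)"

definition reduced_word :: "('a, 'b) monoid_scheme \<Rightarrow> 'a set \<Rightarrow> 'a \<Rightarrow> 'a list \<Rightarrow> bool" where
  "reduced_word G S w ws \<longleftrightarrow>
     ws \<in> lists S \<and> word_prod G ws = w \<and> length ws = cox_length G S w"

text \<open>S(w): the simple reflections appearing in a reduced expression of w (it is the same
  set for every reduced expression; we take the union over all of them).\<close>
definition cox_support :: "('a, 'b) monoid_scheme \<Rightarrow> 'a set \<Rightarrow> 'a \<Rightarrow> 'a set" where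
  "cox_support G S w = \<Union> {set ws | ws. reduced_word G S w ws}"

definition descents :: "('a, 'b) monoid_scheme \<Rightarrow> 'a set \<Rightarrow> 'a \<Rightarrow> 'a set" where
  "descents G S w = {s \<in> S. cox_length G S (w \<otimes>\<^bsub>G\<^esub> s) < cox_length G S w}"

definition min_reps :: "('a, 'b) monoid_scheme \<Rightarrow> 'a set \<Rightarrow> 'a set \<Rightarrow> 'a set" where
  "min_reps G S I = {u \<in> carrier G. \<forall>s\<in>I. cox_length G S (u \<otimes>\<^bsub>G\<^esub> s) > cox_length G S u}"

text \<open>The parabolic component w_I in W_I of w = w^I w_I.\<close>
definition parabolic_comp :: "('a, 'b) monoid_scheme \<Rightarrow> 'a set \<Rightarrow> 'a set \<Rightarrow> 'a \<Rightarrow> 'a" where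
  "parabolic_comp G S I w =
     (THE u. u \<in> generate G I \<and> w \<otimes>\<^bsub>G\<^esub> inv\<^bsub>G\<^esub> u \<in> min_reps G S I)"

definition cox_le :: "('a, 'b) monoid_scheme \<Rightarrow> 'a set \<Rightarrow> 'a \<Rightarrow> 'a \<Rightarrow> bool" where
  "cox_le G S u v \<longleftrightarrow> parabolic_comp G S (cox_support G S u) v = u"

definition is_moebius :: "'a set \<Rightarrow> ('a \<Rightarrow> 'a \<Rightarrow> bool) \<Rightarrow> ('a \<Rightarrow> 'a \<Rightarrow> int) \<Rightarrow> bool" where
  "is_moebius A R f \<longleftrightarrow>
     (\<forall>x y. f x y =
        (if x \<in> A \<and> y \<in> A \<and> R x y then
           (if x = y then 1
            else - (\<Sum>z \<in> {z \<in> A. R x z \<and> R z y \<and> z \<noteq> y}. f x z))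
         else 0))"

definition moebius :: "'a set \<Rightarrow> ('a \<Rightarrow> 'a \<Rightarrow> bool) \<Rightarrow> 'a \<Rightarrow> 'a \<Rightarrow> int" where
  "moebius A R = (THE f. is_moebius A R f)"

end

theory Submission
  imports Defs
begin

text \<open>Let \<open>h(x) = (-1)\<^bsup>|S(x)|\<^esup>\<close> if \<open>S(x) = Des(x)\<close> and \<open>h(x) = 0\<close> otherwise. The elements
  \<open>x \<le> v\<close> with \<open>S(x) = Des(x)\<close> are exactly the parabolic components \<open>v\<^sub>D\<close> for
  \<open>D \<subseteq> Des(v)\<close>, and \<open>v\<^sub>D\<close> has support and descent set \<open>D\<close>. Hence the sum of
  \<open>h(x) t\<^bsup>|S(x)|\<^esup>\<close> over \<open>x \<le> v\<close> is the sum of \<open>(-t)\<^bsup>|D|\<^esup>\<close> over \<open>D \<subseteq> Des(v)\<close>,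
  which is \<open>(1 - t)\<^bsup>|Des(v)|\<^esup>\<close>. At \<open>t = 1\<close> this says that \<open>h\<close> sums to \<open>0\<close> below every
  \<open>v \<noteq> e\<close> (which has a descent), i.e. \<open>h\<close> satisfies the recursion of \<open>\<mu>(e, -)\<close>; as
  \<open>x < v\<close> forces \<open>|S(x)| < |S(v)|\<close>, induction gives \<open>\<mu>(e, x) = h(x)\<close>.

  The Coxeter group theory needed (exchange condition, parabolic factorization
  \<open>w = w\<^sup>I w\<^sub>I\<close> with additive length) is derived from the presentation by Tits' argument:
  the parity of the number of occurrences of a reflection along a word is invariant under
  the relators.\<close>

lemma sum_Pow_signed_monomials:
  assumes "finite A"
  shows "(\<Sum>D\<in>Pow A. smult ((-1) ^ card D) ([:0, 1:] ^ card D))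
    = ([:1, -1:] :: 'a::comm_ring_1 poly) ^ card A"
proof -
  have "([:1, -1:] :: 'a poly) ^ card A = (\<Prod>x\<in>A. smult (-1) [:0, 1:] + 1)"
    by (simp add: one_pCons)
  also have "\<dots> = (\<Sum>D\<in>Pow A. (\<Prod>x\<in>D. smult (-1) [:0, 1:]) * (\<Prod>x\<in>A - D. 1))"
    by (rule prod_add[OF assms])
  also have "\<dots> = (\<Sum>D\<in>Pow A. smult ((-1) ^ card D) ([:0, 1:] ^ card D))"
    by (simp flip: smult_power)
  finally show ?thesis by simp
qed

abbreviation omit :: "nat \<Rightarrow> 'a list \<Rightarrow> 'a list" where
  "omit j ws \<equiv> take j ws @ drop (Suc j) ws"

lemma omit_in_lists: "ws \<in> lists A \<Longrightarrow> omit j ws \<in> lists A"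
  by (auto dest: in_set_takeD in_set_dropD)

lemma count_list_distinct: "distinct xs \<Longrightarrow> count_list xs x = (if x \<in> set xs then 1 else 0)"
  by (induction xs) auto

lemma even_count_list_map:
  assumes "inj_on f (set xs)" and "\<And>u. even (count_list xs u)"
  shows "even (count_list (map f xs) t)"
proof (cases "t \<in> f ` set xs")
  case True
  then obtain u where "u \<in> set xs" "t = f u" by blast
  then show ?thesis using count_list_inj_map[OF assms(1)] assms(2) by simp
next
  case False
  then show ?thesis by simp
qed

section \<open>Moebius functions of ranked posets\<close>

text \<open>A strictly increasing rank makes the fixpoint of \<open>moebius_rec\<close> unique, and iterating
  from \<open>0\<close> reaches it at \<open>(x, y)\<close> after \<open>rank y + 1\<close> steps.\<close>

definition moebius_rec :: "'a set \<Rightarrow> ('a \<Rightarrow> 'a \<Rightarrow> bool) \<Rightarrow> ('a \<Rightarrow> 'a \<Rightarrow> int) \<Rightarrow> 'a \<Rightarrow> 'a \<Rightarrow> int" where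
  "moebius_rec A R f x y =
     (if x \<in> A \<and> y \<in> A \<and> R x y then
        (if x = y then 1 else - (\<Sum>z \<in> {z \<in> A. R x z \<and> R z y \<and> z \<noteq> y}. f x z))
      else 0)"

lemma is_moebius_iff_fixpoint: "is_moebius A R f \<longleftrightarrow> moebius_rec A R f = f"
  by (auto simp: is_moebius_def moebius_rec_def fun_eq_iff)

lemma moebius_rec_cong:
  assumes "\<And>z. z \<in> A \<Longrightarrow> y \<in> A \<Longrightarrow> R z y \<Longrightarrow> z \<noteq> y \<Longrightarrow> f x z = g x z"
  shows "moebius_rec A R f x y = moebius_rec A R g x y"
  using assms by (auto simp: moebius_rec_def intro!: sum.cong)

context
  fixes A :: "'a set" and R :: "'a \<Rightarrow> 'a \<Rightarrow> bool" and rank :: "'a \<Rightarrow> nat"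
  assumes rank_less: "\<And>x y. x \<in> A \<Longrightarrow> y \<in> A \<Longrightarrow> R x y \<Longrightarrow> x \<noteq> y \<Longrightarrow> rank x < rank y"
begin

lemma is_moebius_unique:
  assumes "is_moebius A R f" and "is_moebius A R g"
  shows "f = g"
proof -
  have "f x y = g x y" for x y
  proof (induction y rule: measure_induct_rule[of rank])
    case (less y)
    have "moebius_rec A R f x y = moebius_rec A R g x y"
    proof (rule moebius_rec_cong)
      fix z assume "z \<in> A" "y \<in> A" "R z y" "z \<noteq> y"
      then show "f x z = g x z" using less rank_less by blast
    qed
    then show ?case using assms by (simp add: is_moebius_iff_fixpoint)
  qed
  then show ?thesis by blast
qed

abbreviation moebius_iter :: "nat \<Rightarrow> 'a \<Rightarrow> 'a \<Rightarrow> int" where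
  "moebius_iter n \<equiv> (moebius_rec A R ^^ n) (\<lambda>_ _. 0)"

lemma moebius_iter_stable:
  "rank y < n \<Longrightarrow> rank y < m \<Longrightarrow> moebius_iter n x y = moebius_iter m x y"
proof (induction y arbitrary: n m rule: measure_induct_rule[of rank])
  case (less y)
  then obtain n' m' where nm: "n = Suc n'" "m = Suc m'"
    by (metis less_nat_zero_code not0_implies_Suc)
  have "moebius_rec A R (moebius_iter n') x y = moebius_rec A R (moebius_iter m') x y"
  proof (rule moebius_rec_cong)
    fix z assume "z \<in> A" "y \<in> A" "R z y" "z \<noteq> y"
    then have "rank z < rank y" by (rule rank_less)
    then show "moebius_iter n' x z = moebius_iter m' x z"
      using less.prems nm by (intro less.IH) auto
  qed
  then show ?case using nm by simp
qed

lemma is_moebius_moebius_iter: "is_moebius A R (\<lambda>x y. moebius_iter (Suc (rank y)) x y)"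
proof -
  have "moebius_rec A R (\<lambda>x y. moebius_iter (Suc (rank y)) x y) x y = moebius_iter (Suc (rank y)) x y"
    for x y
  proof -
    have "moebius_rec A R (\<lambda>x y. moebius_iter (Suc (rank y)) x y) x y
        = moebius_rec A R (moebius_iter (Suc (rank y))) x y"
    proof (rule moebius_rec_cong)
      fix z assume "z \<in> A" "y \<in> A" "R z y" "z \<noteq> y"
      then have "rank z < rank y" by (rule rank_less)
      then show "moebius_iter (Suc (rank z)) x z = moebius_iter (Suc (rank y)) x z"
        by (intro moebius_iter_stable) auto
    qed
    also have "\<dots> = moebius_iter (Suc (Suc (rank y))) x y" by simp
    also have "\<dots> = moebius_iter (Suc (rank y)) x y" by (rule moebius_iter_stable) auto
    finally show ?thesis .
  qed
  then show ?thesis by (simp add: is_moebius_iff_fixpoint fun_eq_iff)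
qed

lemma is_moebius_moebius: "is_moebius A R (moebius A R)"
  unfolding moebius_def
  by (rule theI[of "is_moebius A R", OF is_moebius_moebius_iter])
    (rule is_moebius_unique[OF _ is_moebius_moebius_iter])

end

context group
begin

lemma mult_inv_cancel_left [simp]: "x \<in> carrier G \<Longrightarrow> y \<in> carrier G \<Longrightarrow> x \<otimes> (inv x \<otimes> y) = y"
  by (simp flip: m_assoc)

lemma nat_pow_mult_self: "x \<in> carrier G \<Longrightarrow> x [^] (n::nat) \<otimes> x = x \<otimes> x [^] n"
  using nat_pow_Suc2 by simp

lemma inj_on_conjugation: "x \<in> carrier G \<Longrightarrow> inj_on (\<lambda>y. x \<otimes> y \<otimes> inv x) (carrier G)"
  by (rule inj_onI) simp

end

section \<open>Coxeter systems: words and length\<close>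

locale coxeter = group +
  fixes S :: "'a set"
  assumes coxeter_system: "coxeter_system G S"
begin

abbreviation wprod :: "'a list \<Rightarrow> 'a" where "wprod \<equiv> word_prod G"
abbreviation len :: "'a \<Rightarrow> nat" where "len \<equiv> cox_length G S"
abbreviation parabolic :: "'a set \<Rightarrow> 'a set" where "parabolic I \<equiv> generate G I"

lemma finite_S: "finite S"
  and S_carrier: "S \<subseteq> carrier G"
  and one_notin_S: "\<one> \<notin> S"
  and simple_square: "s \<in> S \<Longrightarrow> s \<otimes> s = \<one>"
  and generate_S: "parabolic S = carrier G"
  and word_prod_eq_one_rtrancl:
    "ws \<in> lists S \<Longrightarrow> wprod ws = \<one> \<Longrightarrow> (ws, []) \<in> (relator_step G S \<union> (relator_step G S)\<inverse>)\<^sup>*"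
  using coxeter_system unfolding coxeter_system_def by auto

lemma simple_carrier [simp]: "s \<in> S \<Longrightarrow> s \<in> carrier G"
  using S_carrier by auto

lemma inv_simple [simp]: "s \<in> S \<Longrightarrow> inv s = s"
  using simple_square by (simp add: inv_equality)

lemma simple_mult_cancel_left [simp]: "s \<in> S \<Longrightarrow> y \<in> carrier G \<Longrightarrow> s \<otimes> (s \<otimes> y) = y"
  using simple_square by (simp flip: m_assoc)

lemma simple_mult_cancel_right [simp]: "s \<in> S \<Longrightarrow> y \<in> carrier G \<Longrightarrow> y \<otimes> s \<otimes> s = y"
  using simple_square by (simp add: m_assoc)

lemma wprod_Nil [simp]: "wprod [] = \<one>"
  by (simp add: word_prod_def)

lemma wprod_Cons [simp]: "wprod (a # ws) = a \<otimes> wprod ws"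
  by (simp add: word_prod_def)

lemma wprod_carrier [simp]: "ws \<in> lists S \<Longrightarrow> wprod ws \<in> carrier G"
  by (induction ws) auto

lemma wprod_append [simp]:
  "xs \<in> lists S \<Longrightarrow> ys \<in> lists S \<Longrightarrow> wprod (xs @ ys) = wprod xs \<otimes> wprod ys"
  by (induction xs) (auto simp: m_assoc)

lemma wprod_rev: "ws \<in> lists S \<Longrightarrow> wprod (rev ws) = inv (wprod ws)"
  by (induction ws) (auto simp: inv_mult_group in_lists_conv_set)

lemma parabolic_eq_wprod: "I \<subseteq> S \<Longrightarrow> parabolic I = wprod ` lists I"
proof
  assume I: "I \<subseteq> S"
  show "parabolic I \<subseteq> wprod ` lists I"
  proof
    fix x assume "x \<in> parabolic I"
    then show "x \<in> wprod ` lists I"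
    proof induction
      case one
      show ?case by (auto intro!: image_eqI[of _ _ "[]"])
    next
      case (incl h)
      then show ?case using I by (auto intro!: image_eqI[of _ _ "[h]"])
    next
      case (inv h)
      then show ?case using I by (auto intro!: image_eqI[of _ _ "[h]"])
    next
      case (eng h1 h2)
      then obtain w1 w2 where w: "w1 \<in> lists I" "w2 \<in> lists I" "h1 = wprod w1" "h2 = wprod w2"
        by auto
      then have "h1 \<otimes> h2 = wprod (w1 @ w2)"
        using I lists_mono by (metis subsetD wprod_append)
      then show ?case using w by auto
    qed
  qed
  show "wprod ` lists I \<subseteq> parabolic I"
  proof
    fix x assume "x \<in> wprod ` lists I"
    then obtain ws where "ws \<in> lists I" "x = wprod ws" by blast
    then show "x \<in> parabolic I" by (induction ws arbitrary: x) (auto intro: generate.intros)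
  qed
qed

lemma wprod_parabolic: "I \<subseteq> S \<Longrightarrow> ws \<in> lists I \<Longrightarrow> wprod ws \<in> parabolic I"
  using parabolic_eq_wprod by blast

lemma subgroup_parabolic: "I \<subseteq> S \<Longrightarrow> subgroup (parabolic I) G"
  using S_carrier by (intro generate_is_subgroup) auto

lemma parabolic_mult_closed:
  "I \<subseteq> S \<Longrightarrow> x \<in> parabolic I \<Longrightarrow> y \<in> parabolic I \<Longrightarrow> x \<otimes> y \<in> parabolic I"
  using subgroup.m_closed[OF subgroup_parabolic] .

lemma parabolic_inv_closed: "I \<subseteq> S \<Longrightarrow> x \<in> parabolic I \<Longrightarrow> inv x \<in> parabolic I"
  using subgroup.m_inv_closed[OF subgroup_parabolic] .

lemma parabolic_carrier: "I \<subseteq> S \<Longrightarrow> x \<in> parabolic I \<Longrightarrow> x \<in> carrier G"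
  using subgroup.mem_carrier[OF subgroup_parabolic] .

lemma parabolic_empty: "parabolic {} = {\<one>}"
  using parabolic_eq_wprod[of "{}"] by auto

lemma ex_word: "w \<in> carrier G \<Longrightarrow> \<exists>ws \<in> lists S. wprod ws = w"
  using parabolic_eq_wprod[of S] generate_S by auto

definition reduced :: "'a list \<Rightarrow> bool" where
  "reduced ws \<longleftrightarrow> ws \<in> lists S \<and> length ws = len (wprod ws)"

lemma reduced_word_iff: "reduced_word G S w ws \<longleftrightarrow> reduced ws \<and> wprod ws = w"
  unfolding reduced_word_def reduced_def by auto

lemma reduced_lists: "reduced ws \<Longrightarrow> ws \<in> lists S"
  by (simp add: reduced_def)

lemma len_le_length: "ws \<in> lists S \<Longrightarrow> len (wprod ws) \<le> length ws"
  unfolding cox_length_def by (rule Least_le) auto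

lemma ex_reduced: assumes "w \<in> carrier G" shows "\<exists>ws. reduced ws \<and> wprod ws = w"
proof -
  have "\<exists>n. \<exists>ws \<in> lists S. length ws = n \<and> wprod ws = w"
    using ex_word[OF assms] by blast
  then have "\<exists>ws \<in> lists S. length ws = len w \<and> wprod ws = w"
    unfolding cox_length_def by (rule LeastI_ex)
  then show ?thesis unfolding reduced_def by metis
qed

lemma len_one [simp]: "len \<one> = 0"
  using len_le_length[of "[]"] by simp

lemma reduced_Nil [simp]: "reduced []"
  by (simp add: reduced_def)

lemma len_eq_0_iff: "w \<in> carrier G \<Longrightarrow> len w = 0 \<longleftrightarrow> w = \<one>"
  using ex_reduced[of w] by (auto simp: reduced_def)

lemma len_simple: assumes "s \<in> S" shows "len s = 1"
proof -
  have "len s \<le> 1" using len_le_length[of "[s]"] assms by simp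
  moreover have "len s \<noteq> 0" using len_eq_0_iff[of s] assms one_notin_S by auto
  ultimately show ?thesis by simp
qed

section \<open>Reflection sequences and the exchange condition\<close>

text \<open>The \<open>j\<close>-th entry of the reflection sequence of \<open>s\<^sub>1 \<dots> s\<^sub>k\<close> is the reflection
  \<open>s\<^sub>1 \<dots> s\<^sub>j \<dots> s\<^sub>1\<close>; multiplying by it deletes the \<open>j\<close>-th letter (\<open>refl_seq_nth_mult\<close>).\<close>

primrec refl_seq :: "'a list \<Rightarrow> 'a list" where
  "refl_seq [] = []"
| "refl_seq (s # ws) = s # map (\<lambda>t. s \<otimes> t \<otimes> s) (refl_seq ws)"

definition inversions :: "'a list \<Rightarrow> 'a set" where
  "inversions ws = {t. odd (count_list (refl_seq ws) t)}"

lemma length_refl_seq [simp]: "length (refl_seq ws) = length ws"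
  by (induction ws) auto

lemma refl_seq_carrier: "ws \<in> lists S \<Longrightarrow> t \<in> set (refl_seq ws) \<Longrightarrow> t \<in> carrier G"
  by (induction ws arbitrary: t) auto

lemma refl_seq_square: "ws \<in> lists S \<Longrightarrow> t \<in> set (refl_seq ws) \<Longrightarrow> t \<otimes> t = \<one>"
proof (induction ws arbitrary: t)
  case Nil
  then show ?case by simp
next
  case (Cons s ws)
  show ?case
  proof (cases "t = s")
    case True
    then show ?thesis using Cons.prems simple_square by auto
  next
    case False
    then obtain u where u: "u \<in> set (refl_seq ws)" "t = s \<otimes> u \<otimes> s" using Cons.prems by auto
    have s: "s \<in> S" and uc: "u \<in> carrier G" using Cons.prems u refl_seq_carrier by auto
    have "t \<otimes> t = s \<otimes> (u \<otimes> (s \<otimes> (s \<otimes> u))) \<otimes> s" using u uc s by (simp add: m_assoc)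
    also have "\<dots> = \<one>" using Cons.IH[OF _ u(1)] Cons.prems s uc simple_square
      by (simp add: m_assoc)
    finally show ?thesis .
  qed
qed

lemma refl_seq_append:
  assumes "ys \<in> lists S"
  shows "xs \<in> lists S \<Longrightarrow>
    refl_seq (xs @ ys) = refl_seq xs @ map (\<lambda>t. wprod xs \<otimes> t \<otimes> inv (wprod xs)) (refl_seq ys)"
proof (induction xs)
  case Nil
  have "map (\<lambda>t. \<one> \<otimes> t \<otimes> \<one>) (refl_seq ys) = refl_seq ys"
    using refl_seq_carrier[OF assms] by (intro map_idI) simp
  then show ?case by simp
next
  case (Cons s xs)
  have xs: "xs \<in> lists S" and s: "s \<in> S" using Cons.prems by auto
  have "s \<otimes> (wprod xs \<otimes> t \<otimes> inv (wprod xs)) \<otimes> s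
      = s \<otimes> wprod xs \<otimes> t \<otimes> inv (s \<otimes> wprod xs)" if "t \<in> set (refl_seq ys)" for t
    using refl_seq_carrier[OF assms that] xs s by (simp add: inv_mult_group m_assoc)
  then show ?case using Cons by simp
qed

lemma refl_seq_nth_mult:
  "ws \<in> lists S \<Longrightarrow> j < length ws \<Longrightarrow> refl_seq ws ! j \<otimes> wprod ws = wprod (omit j ws)"
proof (induction ws arbitrary: j)
  case Nil
  then show ?case by simp
next
  case (Cons s ws)
  show ?case
  proof (cases j)
    case 0
    then show ?thesis using Cons.prems by (simp flip: m_assoc)
  next
    case (Suc k)
    have "refl_seq ws ! k \<in> carrier G"
      using refl_seq_carrier[of ws] Cons.prems Suc by auto
    then have "refl_seq (s # ws) ! j \<otimes> wprod (s # ws) = s \<otimes> (refl_seq ws ! k \<otimes> wprod ws)"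
      using Suc Cons.prems by (simp add: m_assoc)
    also have "\<dots> = wprod (omit j (s # ws))"
      using Cons Suc by simp
    finally show ?thesis .
  qed
qed

lemma refl_seq_rev:
  "ws \<in> lists S \<Longrightarrow> map (\<lambda>t. wprod ws \<otimes> t \<otimes> inv (wprod ws)) (refl_seq (rev ws)) = rev (refl_seq ws)"
proof (induction ws)
  case Nil
  then show ?case by simp
next
  case (Cons s ws)
  have ws: "ws \<in> lists S" "rev ws \<in> lists S" and s: "s \<in> S" using Cons.prems by auto
  let ?c = "\<lambda>w t. w \<otimes> t \<otimes> inv w"
  have "refl_seq (rev (s # ws)) = refl_seq (rev ws) @ [inv (wprod ws) \<otimes> s \<otimes> wprod ws]"
    using refl_seq_append[where xs = "rev ws" and ys = "[s]"] ws s wprod_rev[OF ws(1)]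
      wprod_carrier[OF ws(1)]
    by simp
  moreover have "map (?c (wprod (s # ws))) (refl_seq (rev ws))
      = map (\<lambda>t. s \<otimes> t \<otimes> s) (map (?c (wprod ws)) (refl_seq (rev ws)))"
    using refl_seq_carrier[OF ws(2)] ws s by (simp add: m_assoc inv_mult_group)
  moreover have "?c (wprod (s # ws)) (inv (wprod ws) \<otimes> s \<otimes> wprod ws) = s"
    using ws s by (simp add: m_assoc inv_mult_group)
  ultimately show ?case using Cons.IH[OF ws(1)] by (simp add: rev_map)
qed

text \<open>The reflection sequence of \<open>(s t)\<^sup>m\<close> is \<open>s, sts, ststs, \<dots>\<close>, i.e. it is periodic with
  period \<open>m\<close> when \<open>(s t)\<^sup>m = 1\<close>, so every reflection occurs in it an even number of times.\<close>

lemma refl_seq_alternating: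
  assumes "s \<in> S" "t \<in> S"
  shows "refl_seq (concat (replicate m [s, t])) = map (\<lambda>j. (s \<otimes> t) [^] j \<otimes> s) [0..<2 * m]"
proof (induction m)
  case 0
  then show ?case by simp
next
  case (Suc m)
  let ?g = "\<lambda>j::nat. (s \<otimes> t) [^] j \<otimes> s"
  have st: "s \<in> carrier G" "t \<in> carrier G" "s \<otimes> t \<in> carrier G" using assms by auto
  have alt: "concat (replicate m [s, t]) \<in> lists S" using assms by (induction m) auto
  have conj: "(s \<otimes> t) \<otimes> ?g j \<otimes> inv (s \<otimes> t) = ?g (j + 2)" for j
  proof -
    have "(s \<otimes> t) \<otimes> ?g j \<otimes> inv (s \<otimes> t) = ((s \<otimes> t) \<otimes> (s \<otimes> t) [^] j) \<otimes> s \<otimes> (t \<otimes> s)"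
      using st assms by (simp add: inv_mult_group m_assoc)
    also have "\<dots> = ((s \<otimes> t) [^] j \<otimes> (s \<otimes> t)) \<otimes> s \<otimes> (t \<otimes> s)"
      using st by (simp only: nat_pow_mult_self)
    also have "\<dots> = ?g (j + 2)"
      using st by (simp add: m_assoc)
    finally show ?thesis .
  qed
  have "refl_seq (concat (replicate (Suc m) [s, t]))
      = refl_seq [s, t] @ map (\<lambda>x. (s \<otimes> t) \<otimes> x \<otimes> inv (s \<otimes> t)) (map ?g [0..<2 * m])"
    using refl_seq_append[where xs = "[s, t]" and ys = "concat (replicate m [s, t])"] alt assms Suc
    by (simp add: m_assoc)
  also have "map (\<lambda>x. (s \<otimes> t) \<otimes> x \<otimes> inv (s \<otimes> t)) (map ?g [0..<2 * m])
      = map (\<lambda>j. ?g (j + 2)) [0..<2 * m]"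
    by (simp only: map_map o_def conj)
  also have "\<dots> = map ?g [2..<2 * m + 2]"
    by (subst map_add_upt[symmetric]) (simp add: o_def)
  also have "refl_seq [s, t] = [?g 0, ?g 1]"
    using st assms by (simp add: m_assoc)
  also have "[?g 0, ?g 1] @ map ?g [2..<2 * m + 2] = map ?g [0..<2 * Suc m]"
    using upt_add_eq_append[of 0 2 "2 * m"] by (simp add: add.commute upt_rec)
  finally show ?case .
qed

lemma coxeter_relatorD:
  assumes "r \<in> coxeter_relators G S"
  shows "r \<in> lists S" and "wprod r = \<one>" and "even (count_list (refl_seq r) u)"
proof -
  have "r \<in> lists S \<and> wprod r = \<one> \<and> even (count_list (refl_seq r) u)"
    using assms unfolding coxeter_relators_def
  proof (elim UnE CollectE exE conjE)
    fix s assume "r = [s, s]" "s \<in> S"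
    then show ?thesis using simple_square by simp
  next
    fix s t m assume r: "r = concat (replicate m [s, t])" and st: "s \<in> S" "t \<in> S"
      and m: "(s \<otimes> t) [^] m = \<one>"
    let ?g = "\<lambda>j::nat. (s \<otimes> t) [^] j \<otimes> s"
    have "r \<in> lists S" using r st by (induction m arbitrary: r) auto
    moreover have "wprod r = (s \<otimes> t) [^] m"
      using r st by (induction m arbitrary: r) (auto simp: m_assoc nat_pow_mult_self)
    moreover have "map ?g [m..<m + m] = map ?g [0..<m]"
      using st m by (auto simp: map_add_upt[symmetric] nat_pow_mult[symmetric])
    then have "refl_seq r = map ?g [0..<m] @ map ?g [0..<m]"
      using r refl_seq_alternating[OF st] by (simp add: mult_2 upt_add_eq_append[of 0 m])
    ultimately show ?thesis using m by simp
  qed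
  then show "r \<in> lists S" "wprod r = \<one>" "even (count_list (refl_seq r) u)" by auto
qed

lemma inversions_relator:
  assumes xs: "xs \<in> lists S" and ys: "ys \<in> lists S" and r: "r \<in> coxeter_relators G S"
  shows "inversions (xs @ r @ ys) = inversions (xs @ ys)"
proof -
  let ?c = "\<lambda>t. wprod xs \<otimes> t \<otimes> inv (wprod xs)"
  have rS: "r \<in> lists S" and r1: "wprod r = \<one>" using coxeter_relatorD[OF r] by auto
  have "refl_seq (r @ ys) = refl_seq r @ refl_seq ys"
    using refl_seq_append[OF ys rS] r1 refl_seq_carrier[OF ys] by (simp add: map_idI)
  then have "refl_seq (xs @ r @ ys) = refl_seq xs @ map ?c (refl_seq r) @ map ?c (refl_seq ys)"
    using refl_seq_append[OF _ xs, of "r @ ys"] rS ys by simp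
  moreover have "refl_seq (xs @ ys) = refl_seq xs @ map ?c (refl_seq ys)"
    using refl_seq_append[OF ys xs] .
  moreover have "even (count_list (map ?c (refl_seq r)) t)" for t
  proof (rule even_count_list_map)
    show "inj_on ?c (set (refl_seq r))"
      using inj_on_conjugation[OF wprod_carrier[OF xs]] refl_seq_carrier[OF rS]
      by (meson inj_on_subset subsetI)
  qed (rule coxeter_relatorD(3)[OF r])
  ultimately show ?thesis unfolding inversions_def by auto
qed

lemma inversions_rtrancl:
  assumes "(xs, ys) \<in> (relator_step G S \<union> (relator_step G S)\<inverse>)\<^sup>*" and "xs \<in> lists S"
  shows "ys \<in> lists S \<and> inversions ys = inversions xs"
  using assms(1)
proof (induction rule: rtrancl_induct)
  case base
  then show ?case using assms(2) by simp
next
  case (step ys zs)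
  from step(2) obtain us r vs where r: "r \<in> coxeter_relators G S" and
    split: "ys = us @ r @ vs \<and> zs = us @ vs \<or> zs = us @ r @ vs \<and> ys = us @ vs"
    unfolding relator_step_def by auto
  then have uv: "us \<in> lists S" "vs \<in> lists S" using step.IH by auto
  with split step.IH coxeter_relatorD(1)[OF r] show ?case
    using inversions_relator[OF uv r] by auto
qed

lemma inversions_eq_empty: "ws \<in> lists S \<Longrightarrow> wprod ws = \<one> \<Longrightarrow> inversions ws = {}"
  using inversions_rtrancl[OF word_prod_eq_one_rtrancl] by (auto simp: inversions_def)

lemma inversions_eq:
  assumes "xs \<in> lists S" "ys \<in> lists S" and "wprod xs = wprod ys"
  shows "inversions xs = inversions ys"
proof -
  have rys: "rev ys \<in> lists S" using assms(2) by auto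
  have "wprod (xs @ rev ys) = \<one>"
    using assms wprod_rev[OF assms(2)] wprod_append[OF assms(1) rys] by simp
  then have "inversions (xs @ rev ys) = {}" using inversions_eq_empty assms(1) rys by simp
  moreover have "refl_seq (xs @ rev ys) = refl_seq xs @ rev (refl_seq ys)"
    using refl_seq_append[OF rys assms(1)] refl_seq_rev[OF assms(2)] assms(3) by simp
  ultimately have "even (count_list (refl_seq xs) t + count_list (refl_seq ys) t)" for t
    unfolding inversions_def by auto
  then show ?thesis unfolding inversions_def by auto
qed

lemma inversions_subset: "inversions ws \<subseteq> set (refl_seq ws)"
  unfolding inversions_def using count_notin by fastforce

lemma finite_inversions: "finite (inversions ws)"
  using inversions_subset finite_subset by blast

lemma inversions_snoc:
  assumes "ws \<in> lists S" and "s \<in> S"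
  defines "t \<equiv> wprod ws \<otimes> s \<otimes> inv (wprod ws)"
  shows "inversions (ws @ [s])
    = (if t \<in> inversions ws then inversions ws - {t} else insert t (inversions ws))"
  using refl_seq_append[where xs = ws and ys = "[s]"] assms by (auto simp: inversions_def)

lemma take_refl_seq: "take n (refl_seq ws) = refl_seq (take n ws)"
  by (induction ws arbitrary: n) (auto simp: take_map take_Cons')

text \<open>Two equal entries of a reflection sequence cancel by \<open>refl_seq_nth_mult\<close>, leaving a
  shorter word for the same element.\<close>

lemma distinct_refl_seq: assumes "reduced ws" shows "distinct (refl_seq ws)"
proof (rule ccontr)
  assume "\<not> distinct (refl_seq ws)"
  then obtain i j where ij: "i < j" "j < length ws" "refl_seq ws ! i = refl_seq ws ! j"
    by (auto simp: distinct_conv_nth) (metis linorder_neqE_nat)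
  let ?t = "refl_seq ws ! i"
  have ws: "ws \<in> lists S" using assms reduced_lists by blast
  have dS: "omit j ws \<in> lists S" using ws by (rule omit_in_lists)
  have "refl_seq (omit j ws) ! i = take j (refl_seq (omit j ws)) ! i"
    using ij by simp
  also have "\<dots> = take j (refl_seq ws) ! i"
    using ij by (simp add: take_refl_seq)
  finally have ti: "refl_seq (omit j ws) ! i = ?t"
    using ij by simp
  have t: "?t \<in> carrier G" "?t \<otimes> ?t = \<one>"
    using ij ws refl_seq_carrier refl_seq_square by auto
  have "wprod (omit i (omit j ws)) = ?t \<otimes> (?t \<otimes> wprod ws)"
    using refl_seq_nth_mult[OF dS, of i] refl_seq_nth_mult[OF ws ij(2)] ti ij by simp
  also have "\<dots> = wprod ws" using t ws by (simp flip: m_assoc)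
  finally have "len (wprod ws) \<le> length (omit i (omit j ws))"
    using len_le_length[OF omit_in_lists[OF dS, of i]] by simp
  moreover have "length (omit i (omit j ws)) + 2 = length ws"
    using ij by auto
  ultimately show False using assms unfolding reduced_def by linarith
qed

lemma inversions_reduced:
  assumes "reduced ws"
  shows "inversions ws = set (refl_seq ws)" and "card (inversions ws) = len (wprod ws)"
proof -
  show *: "inversions ws = set (refl_seq ws)"
    using distinct_refl_seq[OF assms] by (auto simp: inversions_def count_list_distinct)
  show "card (inversions ws) = len (wprod ws)"
    using distinct_card[OF distinct_refl_seq[OF assms]] assms by (simp add: * reduced_def)
qed

lemma len_mult_simple:
  assumes ws: "ws \<in> lists S" and s: "s \<in> S"
  defines "t \<equiv> wprod ws \<otimes> s \<otimes> inv (wprod ws)"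
  shows "t \<in> inversions ws \<Longrightarrow> len (wprod ws \<otimes> s) + 1 = len (wprod ws)"
    and "t \<notin> inversions ws \<Longrightarrow> len (wprod ws \<otimes> s) = len (wprod ws) + 1"
proof -
  obtain us where us: "reduced us" "wprod us = wprod ws"
    using ex_reduced[OF wprod_carrier[OF ws]] by blast
  obtain vs where vs: "reduced vs" "wprod vs = wprod ws \<otimes> s"
    using ex_reduced[of "wprod ws \<otimes> s"] ws s by auto
  have usS: "us \<in> lists S" and vsS: "vs \<in> lists S" using us vs reduced_lists by auto
  have "inversions vs = inversions (us @ [s])"
    using inversions_eq[OF vsS, of "us @ [s]"] usS s vs us by simp
  also have "\<dots> = (if t \<in> inversions ws then inversions ws - {t} else insert t (inversions ws))"
    using inversions_snoc[OF usS s] inversions_eq[OF usS ws] us unfolding t_def by simp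
  finally have inv_vs: "inversions vs = \<dots>" .
  have card_ws: "card (inversions ws) = len (wprod ws)"
    using inversions_reduced(2)[OF us(1)] inversions_eq[OF usS ws] us by simp
  have card_vs: "card (inversions vs) = len (wprod ws \<otimes> s)"
    using inversions_reduced(2)[OF vs(1)] vs by simp
  show "t \<in> inversions ws \<Longrightarrow> len (wprod ws \<otimes> s) + 1 = len (wprod ws)"
    using inv_vs card_ws card_vs finite_inversions
    by (metis card_Suc_Diff1 Suc_eq_plus1)
  show "t \<notin> inversions ws \<Longrightarrow> len (wprod ws \<otimes> s) = len (wprod ws) + 1"
    using inv_vs card_ws card_vs finite_inversions by simp
qed

lemma len_mult_simple_cases:
  assumes "w \<in> carrier G" and "s \<in> S"
  shows "len (w \<otimes> s) = len w + 1 \<or> len (w \<otimes> s) + 1 = len w"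
  using ex_word[OF assms(1)] len_mult_simple[OF _ assms(2)] by metis

lemma exchange:
  assumes ws: "ws \<in> lists S" and s: "s \<in> S" and less: "len (wprod ws \<otimes> s) < len (wprod ws)"
  shows "\<exists>j < length ws. wprod ws \<otimes> s = wprod (omit j ws)"
proof -
  let ?t = "wprod ws \<otimes> s \<otimes> inv (wprod ws)"
  have "?t \<in> set (refl_seq ws)"
    using len_mult_simple(2)[OF ws s] less inversions_subset by fastforce
  then obtain j where j: "j < length ws" "refl_seq ws ! j = ?t"
    by (auto simp: in_set_conv_nth)
  have "?t \<otimes> wprod ws = wprod ws \<otimes> s" using ws s by (simp add: m_assoc)
  then show ?thesis using refl_seq_nth_mult[OF ws j(1)] j by auto
qed

lemma reduced_snoc:
  assumes "reduced (ws @ [s])"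
  shows "reduced ws" and "len (wprod ws \<otimes> s) = len (wprod ws) + 1"
proof -
  have ws: "ws \<in> lists S" and s: "s \<in> S" using reduced_lists[OF assms] by auto
  have "len (wprod ws \<otimes> s) = length ws + 1"
    using assms ws s unfolding reduced_def by simp
  moreover have "len (wprod ws) \<le> length ws" using len_le_length[OF ws] .
  moreover have "len (wprod ws \<otimes> s) \<le> len (wprod ws) + 1"
    using len_mult_simple_cases[OF wprod_carrier[OF ws] s] by auto
  ultimately show "reduced ws" "len (wprod ws \<otimes> s) = len (wprod ws) + 1"
    using ws unfolding reduced_def by auto
qed

section \<open>Parabolic subgroups and factorization\<close>

lemma ex_reduced_parabolic:
  assumes I: "I \<subseteq> S" and w: "w \<in> parabolic I"
  shows "\<exists>ws \<in> lists I. reduced ws \<and> wprod ws = w"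
proof -
  obtain ws where ws: "ws \<in> lists I" "wprod ws = w" using w parabolic_eq_wprod[OF I] by auto
  have "\<exists>us \<in> lists I. reduced us \<and> wprod us = wprod ws" using ws(1)
  proof (induction ws rule: rev_induct)
    case Nil
    show ?case by (auto intro!: bexI[of _ "[]"])
  next
    case (snoc s vs)
    have vs: "vs \<in> lists I" "s \<in> I" and vsS: "vs \<in> lists S" "s \<in> S" using snoc.prems I by auto
    obtain us where us: "us \<in> lists I" "reduced us" "wprod us = wprod vs" using snoc.IH vs by auto
    have usS: "us \<in> lists S" using us I by auto
    have prod: "wprod (vs @ [s]) = wprod us \<otimes> s" using vsS us by simp
    consider "len (wprod us \<otimes> s) = len (wprod us) + 1" | "len (wprod us \<otimes> s) + 1 = len (wprod us)"
      using len_mult_simple_cases[OF wprod_carrier[OF usS] vsS(2)] by auto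
    then show ?case
    proof cases
      case 1
      then have "reduced (us @ [s])" using us usS vsS unfolding reduced_def by simp
      then show ?thesis using us vs prod by (intro bexI[of _ "us @ [s]"]) (auto simp: usS vsS)
    next
      case 2
      then obtain j where j: "j < length us" "wprod us \<otimes> s = wprod (omit j us)"
        using exchange[OF usS vsS(2)] by auto
      have "reduced (omit j us)"
        using j 2 us omit_in_lists[OF usS] unfolding reduced_def by (auto simp: min_def)
      moreover have "wprod (omit j us) = wprod (vs @ [s])" using j prod by simp
      ultimately show ?thesis using omit_in_lists[OF us(1)] by blast
    qed
  qed
  then show ?thesis using ws by simp
qed

lemma simple_in_parabolic:
  assumes I: "I \<subseteq> S" and s: "s \<in> S" "s \<in> parabolic I"
  shows "s \<in> I"
proof -
  obtain us where us: "us \<in> lists I" "reduced us" "wprod us = s"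
    using ex_reduced_parabolic[OF I s(2)] by auto
  then have "length us = 1" using len_simple[OF s(1)] unfolding reduced_def by simp
  then obtain a where "us = [a]" by (cases us) auto
  then show ?thesis using us I by auto
qed

lemma reduced_in_parabolic:
  assumes I: "I \<subseteq> S"
  shows "reduced ws \<Longrightarrow> wprod ws \<in> parabolic I \<Longrightarrow> ws \<in> lists I"
proof (induction ws rule: rev_induct)
  case Nil
  then show ?case by simp
next
  case (snoc s vs)
  have vs: "vs \<in> lists S" "s \<in> S" using reduced_lists[OF snoc.prems(1)] by auto
  let ?w = "wprod (vs @ [s])"
  have ws: "?w \<otimes> s = wprod vs" and wc: "?w \<in> carrier G" using vs by (simp_all add: m_assoc)
  obtain us where us: "us \<in> lists I" "reduced us" "wprod us = ?w"
    using ex_reduced_parabolic[OF I snoc.prems(2)] by auto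
  have usS: "us \<in> lists S" using us I by auto
  have "len (wprod us \<otimes> s) < len (wprod us)"
    using us ws reduced_snoc(2)[OF snoc.prems(1)] vs by simp
  then obtain j where j: "wprod us \<otimes> s = wprod (omit j us)"
    using exchange[OF usS vs(2)] by auto
  have vsI: "wprod vs \<in> parabolic I"
    using j ws us wprod_parabolic[OF I omit_in_lists[OF us(1)]] by simp
  have "s = inv ?w \<otimes> wprod vs"
    using vs by (simp add: inv_mult_group m_assoc)
  also have "\<dots> \<in> parabolic I"
    using vsI snoc.prems(2) by (intro parabolic_mult_closed parabolic_inv_closed I)
  finally have "s \<in> I" using simple_in_parabolic[OF I vs(2)] by simp
  then show ?case using snoc.IH[OF reduced_snoc(1)[OF snoc.prems(1)] vsI] by simp
qed

abbreviation supp :: "'a \<Rightarrow> 'a set" where "supp \<equiv> cox_support G S"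
abbreviation des :: "'a \<Rightarrow> 'a set" where "des \<equiv> descents G S"

lemma support_eq: "supp w = \<Union> {set ws | ws. reduced ws \<and> wprod ws = w}"
  unfolding cox_support_def reduced_word_iff by simp

lemma support_subset: "supp w \<subseteq> S"
  unfolding support_eq using reduced_lists by fastforce

lemma finite_support: "finite (supp w)"
  using support_subset finite_S finite_subset by blast

lemma set_subset_support: "reduced ws \<Longrightarrow> set ws \<subseteq> supp (wprod ws)"
  unfolding support_eq by blast

lemma support_one: "supp \<one> = {}"
  unfolding support_eq reduced_def by auto

lemma support_parabolic: "I \<subseteq> S \<Longrightarrow> w \<in> parabolic I \<Longrightarrow> supp w \<subseteq> I"
  unfolding support_eq using reduced_in_parabolic by blast

lemma mem_parabolic_support: assumes "w \<in> carrier G" shows "w \<in> parabolic (supp w)"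
proof -
  obtain ws where ws: "reduced ws" "wprod ws = w" using ex_reduced[OF assms] by auto
  then have "ws \<in> lists (supp w)" using set_subset_support[OF ws(1)] by auto
  then show ?thesis using wprod_parabolic[OF support_subset] ws by auto
qed

lemma descents_subset: "des w \<subseteq> S"
  unfolding descents_def by auto

lemma descents_subset_support: assumes "w \<in> carrier G" shows "des w \<subseteq> supp w"
proof
  fix s assume "s \<in> des w"
  then have s: "s \<in> S" "len (w \<otimes> s) < len w" unfolding descents_def by auto
  then have l: "len (w \<otimes> s) + 1 = len w" using len_mult_simple_cases[OF assms s(1)] by auto
  obtain vs where vs: "reduced vs" "wprod vs = w \<otimes> s" using ex_reduced[of "w \<otimes> s"] assms s by auto
  have vsS: "vs \<in> lists S" using vs reduced_lists by auto
  have "wprod (vs @ [s]) = w" using vsS vs assms s by (simp add: m_assoc)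
  moreover have "reduced (vs @ [s])" using vs l vsS s calculation unfolding reduced_def by auto
  ultimately show "s \<in> supp w" using set_subset_support by fastforce
qed

lemma descents_nonempty: assumes "w \<in> carrier G" "w \<noteq> \<one>" shows "des w \<noteq> {}"
proof -
  obtain ws where ws: "reduced ws" "wprod ws = w" using ex_reduced[OF assms(1)] by auto
  then obtain vs s where vs: "ws = vs @ [s]" using assms by (cases ws rule: rev_cases) auto
  have S: "vs \<in> lists S" "s \<in> S" using reduced_lists[OF ws(1)] vs by auto
  have "w = wprod vs \<otimes> s" using ws vs S by simp
  then have "w \<otimes> s = wprod vs" using S by simp
  then have "s \<in> des w" using reduced_snoc(2) ws vs S unfolding descents_def by auto
  then show ?thesis by auto
qed

abbreviation pcomp :: "'a set \<Rightarrow> 'a \<Rightarrow> 'a" where "pcomp \<equiv> parabolic_comp G S"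

lemma len_mult_parabolic_reduced:
  assumes I: "I \<subseteq> S" and u: "u \<in> carrier G"
    and min: "\<And>x. x \<in> parabolic I \<Longrightarrow> len u \<le> len (u \<otimes> x)"
  shows "xs \<in> lists I \<Longrightarrow> reduced xs \<Longrightarrow> len (u \<otimes> wprod xs) = len u + length xs"
proof (induction xs rule: rev_induct)
  case Nil
  then show ?case using u by simp
next
  case (snoc a xs)
  have xsI: "xs \<in> lists I" "a \<in> I" and xsS: "xs \<in> lists S" "a \<in> S" using snoc.prems I by auto
  let ?x = "wprod xs"
  have xc: "?x \<in> carrier G" and ac: "a \<in> carrier G" using xsS by auto
  have IH: "len (u \<otimes> ?x) = len u + length xs"
    using snoc.IH xsI reduced_snoc(1)[OF snoc.prems(2)] by simp
  obtain ru where ru: "reduced ru" "wprod ru = u" using ex_reduced[OF u] by auto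
  have ruS: "ru \<in> lists S" using reduced_lists[OF ru(1)] .
  have not_shorter: "\<not> len (u \<otimes> ?x \<otimes> a) < len (u \<otimes> ?x)"
  proof
    assume "len (u \<otimes> ?x \<otimes> a) < len (u \<otimes> ?x)"
    then obtain j where j: "j < length (ru @ xs)" "u \<otimes> ?x \<otimes> a = wprod (omit j (ru @ xs))"
      using exchange[of "ru @ xs" a] ruS xsS ru by auto
    show False
    proof (cases "j < length ru")
      case True
      \<comment> \<open>the letter deleted lies in \<open>u\<close>, which yields a shorter element of the coset \<open>u W\<^sub>I\<close>\<close>
      have dS: "omit j ru \<in> lists S" using omit_in_lists[OF ruS] .
      have "omit j (ru @ xs) = omit j ru @ xs" using True by simp
      then have e: "wprod (omit j ru) \<otimes> ?x = u \<otimes> ?x \<otimes> a"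
        using j wprod_append[OF dS xsS(1)] by simp
      have "wprod (omit j ru) = wprod (omit j ru) \<otimes> ?x \<otimes> inv ?x"
        using dS xc by (simp add: m_assoc)
      also have "\<dots> = u \<otimes> (?x \<otimes> a \<otimes> inv ?x)"
        by (simp only: e) (simp add: m_assoc u xc ac)
      finally have "wprod (omit j ru) = u \<otimes> (?x \<otimes> a \<otimes> inv ?x)" .
      moreover have "?x \<otimes> a \<otimes> inv ?x \<in> parabolic I"
        using wprod_parabolic[OF I xsI(1)] generate.incl[OF xsI(2)]
        by (intro parabolic_mult_closed parabolic_inv_closed I)
      ultimately have "len u \<le> len (wprod (omit j ru))" using min by simp
      moreover have "len (wprod (omit j ru)) < length ru" using len_le_length[OF dS] True by simp
      ultimately show False using ru unfolding reduced_def by simp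
    next
      case False
      \<comment> \<open>the letter deleted lies in \<open>xs\<close>, contradicting that \<open>xs @ [a]\<close> is reduced\<close>
      define k where "k = j - length ru"
      have k: "k < length xs" using j False unfolding k_def by simp
      have dS: "omit k xs \<in> lists S" using omit_in_lists[OF xsS(1)] .
      have "omit j (ru @ xs) = ru @ omit k xs" using False unfolding k_def by (simp add: Suc_diff_le)
      then have "u \<otimes> (?x \<otimes> a) = u \<otimes> wprod (omit k xs)" using j ru ruS dS u xc ac by (simp add: m_assoc)
      then have "len (?x \<otimes> a) \<le> length (omit k xs)" using len_le_length[OF dS] u xc ac dS by simp
      then show False using reduced_snoc(2)[OF snoc.prems(2)] reduced_snoc(1)[OF snoc.prems(2)] k
        unfolding reduced_def by simp
    qed
  qed
  have "len (u \<otimes> ?x \<otimes> a) = len (u \<otimes> ?x) + 1"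
    using not_shorter len_mult_simple_cases[OF m_closed[OF u xc] xsS(2)] by auto
  then show ?case using IH u xc ac xsS by (simp add: m_assoc)
qed

lemma len_mult_parabolic:
  assumes I: "I \<subseteq> S" and u: "u \<in> carrier G"
    and min: "\<And>x. x \<in> parabolic I \<Longrightarrow> len u \<le> len (u \<otimes> x)"
    and x: "x \<in> parabolic I"
  shows "len (u \<otimes> x) = len u + len x"
proof -
  obtain xs where "xs \<in> lists I" "reduced xs" "wprod xs = x"
    using ex_reduced_parabolic[OF I x] by auto
  then show ?thesis using len_mult_parabolic_reduced[OF I u min] unfolding reduced_def by auto
qed

lemma ex_min_coset_rep:
  assumes I: "I \<subseteq> S" and w: "w \<in> carrier G"
  obtains u where "u \<in> min_reps G S I" and "inv u \<otimes> w \<in> parabolic I"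
    and "\<And>x. x \<in> parabolic I \<Longrightarrow> len (u \<otimes> x) = len u + len x"
proof -
  let ?coset = "\<lambda>u. \<exists>x \<in> parabolic I. u = w \<otimes> x"
  have "?coset w" using w generate.one[of G I] by (intro bexI[of _ "\<one>"]) auto
  then obtain u where coset: "?coset u" and least: "\<And>y. ?coset y \<Longrightarrow> len u \<le> len y"
    using ex_has_least_nat[of ?coset w len] by blast
  then obtain x0 where x0: "x0 \<in> parabolic I" "u = w \<otimes> x0" by blast
  have x0c: "x0 \<in> carrier G" using parabolic_carrier[OF I x0(1)] .
  have u: "u \<in> carrier G" using x0 x0c w by simp
  have min: "len u \<le> len (u \<otimes> x)" if "x \<in> parabolic I" for x
  proof (rule least)
    show "?coset (u \<otimes> x)"
      using that x0 w x0c parabolic_carrier[OF I that] parabolic_mult_closed[OF I x0(1) that]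
      by (intro bexI[of _ "x0 \<otimes> x"]) (auto simp: m_assoc)
  qed
  note add = len_mult_parabolic[OF I u min]
  show thesis
  proof
    show "u \<in> min_reps G S I"
      unfolding min_reps_def using u add generate.incl[of _ I G] len_simple I by auto
    show "inv u \<otimes> w \<in> parabolic I"
      using x0 w x0c parabolic_inv_closed[OF I x0(1)] by (simp add: inv_mult_group m_assoc)
  qed (rule add)
qed

lemma min_rep_mult_parabolic:
  assumes I: "I \<subseteq> S" and u: "u \<in> carrier G"
    and add: "\<And>x. x \<in> parabolic I \<Longrightarrow> len (u \<otimes> x) = len u + len x"
    and y: "y \<in> parabolic I" and rep: "u \<otimes> y \<in> min_reps G S I"
  shows "y = \<one>"
proof (rule ccontr)
  assume "y \<noteq> \<one>"
  obtain ys where ys: "ys \<in> lists I" "reduced ys" "wprod ys = y"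
    using ex_reduced_parabolic[OF I y] by auto
  with \<open>y \<noteq> \<one>\<close> obtain zs s where zs: "ys = zs @ [s]" by (cases ys rule: rev_cases) auto
  have zsI: "zs \<in> lists I" "s \<in> I" and zsS: "zs \<in> lists S" "s \<in> S" using ys zs I by auto
  have "y = wprod zs \<otimes> s" using ys zs zsS by simp
  then have "u \<otimes> y \<otimes> s = u \<otimes> wprod zs"
    using zsS u by (simp add: m_assoc simple_square)
  then have "len (u \<otimes> y \<otimes> s) = len u + len (wprod zs)"
    using add wprod_parabolic[OF I zsI(1)] by simp
  moreover have "len (u \<otimes> y) = len u + len (wprod zs) + 1"
    using add[OF y] reduced_snoc(2)[of zs s] ys zs zsS by simp
  moreover have "len (u \<otimes> y) < len (u \<otimes> y \<otimes> s)"
    using rep zsI unfolding min_reps_def by auto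
  ultimately show False by linarith
qed

lemma parabolic_comp_eq:
  assumes I: "I \<subseteq> S" and u: "u \<in> min_reps G S I" and p: "p \<in> parabolic I"
  shows "pcomp I (u \<otimes> p) = p"
  unfolding parabolic_comp_def
proof (rule the_equality)
  have uc: "u \<in> carrier G" using u unfolding min_reps_def by simp
  have pc: "p \<in> carrier G" using parabolic_carrier[OF I p] .
  show "p \<in> parabolic I \<and> u \<otimes> p \<otimes> inv p \<in> min_reps G S I"
    using p u uc pc by (simp add: m_assoc)
  fix q assume q: "q \<in> parabolic I \<and> u \<otimes> p \<otimes> inv q \<in> min_reps G S I"
  have qc: "q \<in> carrier G" using parabolic_carrier[OF I] q by blast
  obtain u0 where u0: "u0 \<in> min_reps G S I" "inv u0 \<otimes> u \<in> parabolic I"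
    and add: "\<And>x. x \<in> parabolic I \<Longrightarrow> len (u0 \<otimes> x) = len u0 + len x"
    using ex_min_coset_rep[OF I uc] by blast
  have u0c: "u0 \<in> carrier G" using u0 unfolding min_reps_def by simp
  have "inv u0 \<otimes> u = \<one>"
    using min_rep_mult_parabolic[OF I u0c add u0(2)] u u0c uc by simp
  then have "u = u0" using u0c uc by (metis mult_inv_cancel_left r_one)
  moreover have "p \<otimes> inv q \<in> parabolic I"
    using p q parabolic_mult_closed[OF I] parabolic_inv_closed[OF I] by blast
  ultimately have "p \<otimes> inv q = \<one>"
    using min_rep_mult_parabolic[OF I u0c add] q uc pc qc by (simp add: m_assoc)
  then show "q = p" using pc qc by (metis inv_closed m_assoc l_inv r_one l_one)
qed

lemma parabolic_factorization:
  assumes I: "I \<subseteq> S" and w: "w \<in> carrier G"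
  obtains u where "u \<in> carrier G" and "u \<otimes> pcomp I w = w" and "pcomp I w \<in> parabolic I"
    and "\<And>x. x \<in> parabolic I \<Longrightarrow> len (u \<otimes> x) = len u + len x"
proof -
  obtain u where u: "u \<in> min_reps G S I" "inv u \<otimes> w \<in> parabolic I"
    and add: "\<And>x. x \<in> parabolic I \<Longrightarrow> len (u \<otimes> x) = len u + len x"
    using ex_min_coset_rep[OF I w] by blast
  have uc: "u \<in> carrier G" using u unfolding min_reps_def by simp
  have "pcomp I w = inv u \<otimes> w"
    using parabolic_comp_eq[OF I u(1) u(2)] uc w by simp
  then show thesis using that[OF uc _ _ add] u(2) uc w by simp
qed

lemma pcomp_parabolic: "I \<subseteq> S \<Longrightarrow> w \<in> carrier G \<Longrightarrow> pcomp I w \<in> parabolic I"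
  by (rule parabolic_factorization)

lemma pcomp_carrier: "I \<subseteq> S \<Longrightarrow> w \<in> carrier G \<Longrightarrow> pcomp I w \<in> carrier G"
  using pcomp_parabolic parabolic_carrier by blast

lemma pcomp_id: assumes I: "I \<subseteq> S" and w: "w \<in> parabolic I" shows "pcomp I w = w"
proof -
  have "\<one> \<in> min_reps G S I" unfolding min_reps_def using I len_simple by auto
  from parabolic_comp_eq[OF I this w] show ?thesis using parabolic_carrier[OF I w] by simp
qed

lemma descents_pcomp:
  assumes I: "I \<subseteq> S" and w: "w \<in> carrier G" and s: "s \<in> I"
  shows "s \<in> des (pcomp I w) \<longleftrightarrow> s \<in> des w"
proof -
  obtain u where u: "u \<in> carrier G" "u \<otimes> pcomp I w = w"
    and add: "\<And>x. x \<in> parabolic I \<Longrightarrow> len (u \<otimes> x) = len u + len x"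
    using parabolic_factorization[OF I w] by blast
  have sS: "s \<in> S" using s I by auto
  have p: "pcomp I w \<in> parabolic I" using pcomp_parabolic[OF I w] .
  have ps: "pcomp I w \<otimes> s \<in> parabolic I"
    using parabolic_mult_closed[OF I p generate.incl[OF s]] .
  have "u \<otimes> (pcomp I w \<otimes> s) = (u \<otimes> pcomp I w) \<otimes> s"
    using u(1) pcomp_carrier[OF I w] sS by (simp add: m_assoc)
  then have "w \<otimes> s = u \<otimes> (pcomp I w \<otimes> s)" by (simp only: u(2))
  then have "len (w \<otimes> s) = len u + len (pcomp I w \<otimes> s)" using add[OF ps] by simp
  moreover have "len w = len u + len (pcomp I w)" using add[OF p] u by simp
  ultimately show ?thesis using sS unfolding descents_def by auto
qed

lemma support_pcomp:
  assumes I: "I \<subseteq> S" and w: "w \<in> carrier G"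
  shows "supp (pcomp I w) \<subseteq> supp w"
proof
  fix a assume "a \<in> supp (pcomp I w)"
  then obtain ws where ws: "reduced ws" "wprod ws = pcomp I w" "a \<in> set ws"
    unfolding support_eq by blast
  obtain u where u: "u \<in> carrier G" "u \<otimes> pcomp I w = w"
    and add: "\<And>x. x \<in> parabolic I \<Longrightarrow> len (u \<otimes> x) = len u + len x"
    using parabolic_factorization[OF I w] by blast
  obtain us where us: "reduced us" "wprod us = u" using ex_reduced[OF u(1)] by blast
  have S: "us \<in> lists S" "ws \<in> lists S" using us ws reduced_lists by auto
  have prod: "wprod (us @ ws) = w" using S us ws u by simp
  then have "reduced (us @ ws)"
    using add[OF pcomp_parabolic[OF I w]] us ws u S unfolding reduced_def by simp
  then show "a \<in> supp w" using set_subset_support prod ws(3) by fastforce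
qed

section \<open>The order and its Moebius function\<close>

abbreviation cle :: "'a \<Rightarrow> 'a \<Rightarrow> bool" where "cle \<equiv> cox_le G S"

lemma cox_le_refl: "y \<in> carrier G \<Longrightarrow> cle y y"
  unfolding cox_le_def using pcomp_id[OF support_subset mem_parabolic_support] .

lemma one_cox_le: "y \<in> carrier G \<Longrightarrow> cle \<one> y"
  unfolding cox_le_def support_one using pcomp_parabolic[of "{}" y] parabolic_empty by auto

lemma cox_le_support: "y \<in> carrier G \<Longrightarrow> cle z y \<Longrightarrow> supp z \<subseteq> supp y"
  unfolding cox_le_def using support_pcomp[OF support_subset] by metis

lemma cox_le_card_support_less:
  assumes "y \<in> carrier G" "cle z y" "z \<noteq> y"
  shows "card (supp z) < card (supp y)"
proof -
  have "supp z \<noteq> supp y"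
  proof
    assume "supp z = supp y"
    then have "pcomp (supp z) y = y"
      using pcomp_id[OF support_subset mem_parabolic_support[OF assms(1)]] by simp
    then show False using assms(2,3) unfolding cox_le_def by simp
  qed
  then show ?thesis
    using cox_le_support[OF assms(1,2)] finite_support psubset_card_mono by blast
qed

lemma finite_cox_le: "finite {z \<in> carrier G. cle z y}"
proof (rule finite_subset)
  show "{z \<in> carrier G. cle z y} \<subseteq> (\<lambda>I. pcomp I y) ` Pow S"
  proof
    fix z assume "z \<in> {z \<in> carrier G. cle z y}"
    then have "z = pcomp (supp z) y" unfolding cox_le_def by simp
    then show "z \<in> (\<lambda>I. pcomp I y) ` Pow S" using support_subset by blast
  qed
qed (simp add: finite_S)

definition moebius_formula :: "'a \<Rightarrow> int" where
  "moebius_formula z = (if supp z = des z then (-1) ^ card (supp z) else 0)"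

lemma pcomp_descents:
  assumes v: "v \<in> carrier G" and D: "D \<subseteq> des v"
  shows "supp (pcomp D v) = D" and "des (pcomp D v) = D"
proof -
  have DS: "D \<subseteq> S" using D descents_subset by blast
  have "supp (pcomp D v) \<subseteq> D"
    using support_parabolic[OF DS pcomp_parabolic[OF DS v]] .
  moreover have "D \<subseteq> des (pcomp D v)"
    using descents_pcomp[OF DS v] D by blast
  moreover have "des (pcomp D v) \<subseteq> supp (pcomp D v)"
    using descents_subset_support[OF pcomp_carrier[OF DS v]] .
  ultimately show "supp (pcomp D v) = D" "des (pcomp D v) = D" by auto
qed

lemma cox_le_support_eq_descents:
  assumes v: "v \<in> carrier G"
  shows "{z \<in> carrier G. cle z v \<and> supp z = des z} = (\<lambda>D. pcomp D v) ` Pow (des v)"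
proof
  show "(\<lambda>D. pcomp D v) ` Pow (des v) \<subseteq> {z \<in> carrier G. cle z v \<and> supp z = des z}"
  proof clarify
    fix D assume D: "D \<subseteq> des v"
    then have "D \<subseteq> S" using descents_subset by blast
    then show "pcomp D v \<in> carrier G \<and> cle (pcomp D v) v \<and> supp (pcomp D v) = des (pcomp D v)"
      using pcomp_descents[OF v D] pcomp_carrier[OF _ v] unfolding cox_le_def by simp
  qed
next
  show "{z \<in> carrier G. cle z v \<and> supp z = des z} \<subseteq> (\<lambda>D. pcomp D v) ` Pow (des v)"
  proof
    fix z assume z: "z \<in> {z \<in> carrier G. cle z v \<and> supp z = des z}"
    then have pz: "pcomp (supp z) v = z" unfolding cox_le_def by blast
    have "supp z \<subseteq> des v"
    proof
      fix s assume s: "s \<in> supp z"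
      then have "s \<in> des (pcomp (supp z) v)" using z pz by simp
      then show "s \<in> des v" using descents_pcomp[OF support_subset v s] by simp
    qed
    then show "z \<in> (\<lambda>D. pcomp D v) ` Pow (des v)" using pz by (intro rev_image_eqI) auto
  qed
qed

lemma sum_cox_le_moebius_formula:
  assumes v: "v \<in> carrier G"
  shows "(\<Sum>z \<in> {z \<in> carrier G. cle z v}. smult (moebius_formula z) ([:0, 1:] ^ card (supp z)))
    = [:1, -1:] ^ card (des v)"
proof -
  let ?B = "{z \<in> carrier G. cle z v \<and> supp z = des z}"
  let ?f = "\<lambda>z. smult (moebius_formula z) ([:0, 1:] ^ card (supp z))"
  have "(\<Sum>z \<in> {z \<in> carrier G. cle z v}. ?f z) = (\<Sum>z \<in> ?B. ?f z)"
    by (rule sum.mono_neutral_right[OF finite_cox_le]) (auto simp: moebius_formula_def)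
  also have "\<dots> = (\<Sum>D \<in> Pow (des v). ?f (pcomp D v))"
    unfolding cox_le_support_eq_descents[OF v]
    by (rule sum.reindex_cong[where l = "\<lambda>D. pcomp D v"])
      (auto intro!: inj_onI simp: pcomp_descents(1)[OF v] dest: arg_cong[where f = supp])
  also have "\<dots> = (\<Sum>D \<in> Pow (des v). smult ((-1) ^ card D) ([:0, 1:] ^ card D))"
    by (rule sum.cong) (auto simp: moebius_formula_def pcomp_descents[OF v])
  also have "\<dots> = [:1, -1:] ^ card (des v)"
    using sum_Pow_signed_monomials descents_subset finite_S finite_subset by metis
  finally show ?thesis .
qed

lemma sum_cox_le_moebius_formula_eq_0:
  assumes v: "v \<in> carrier G" "v \<noteq> \<one>"
  shows "(\<Sum>z \<in> {z \<in> carrier G. cle z v}. moebius_formula z) = 0"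
proof -
  have "card (des v) \<noteq> 0"
    using descents_nonempty[OF v] descents_subset finite_S finite_subset card_0_eq by metis
  then show ?thesis
    using arg_cong[OF sum_cox_le_moebius_formula[OF v(1)], of "\<lambda>p. poly p 1"] by (simp add: poly_sum)
qed

abbreviation mu :: "'a \<Rightarrow> 'a \<Rightarrow> int" where "mu \<equiv> moebius (carrier G) cle"

lemma is_moebius_cox_le: "is_moebius (carrier G) cle mu"
  by (rule is_moebius_moebius[where rank = "\<lambda>z. card (supp z)"]) (rule cox_le_card_support_less)

lemma moebius_one_eq_moebius_formula: "x \<in> carrier G \<Longrightarrow> mu \<one> x = moebius_formula x"
proof (induction x rule: measure_induct_rule[of "\<lambda>z. card (supp z)"])
  case (less x)
  show ?case
  proof (cases "x = \<one>")
    case True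
    have "mu \<one> \<one> = 1"
      using is_moebius_cox_le cox_le_refl[of \<one>] unfolding is_moebius_def by simp
    then show ?thesis using True support_one descents_subset_support[of \<one>]
      by (simp add: moebius_formula_def)
  next
    case False
    let ?B = "{z \<in> carrier G. cle z x}"
    have "(\<Sum>z \<in> ?B - {x}. mu \<one> z) = (\<Sum>z \<in> ?B - {x}. moebius_formula z)"
      using less cox_le_card_support_less by (intro sum.cong) auto
    also have "\<dots> = - moebius_formula x"
      using sum_cox_le_moebius_formula_eq_0[OF less.prems False] cox_le_refl[OF less.prems]
        sum_diff1[OF finite_cox_le, of moebius_formula x] less.prems by simp
    moreover have "{z \<in> carrier G. cle \<one> z \<and> cle z x \<and> z \<noteq> x} = ?B - {x}"
      using one_cox_le by auto
    ultimately have "(\<Sum>z \<in> {z \<in> carrier G. cle \<one> z \<and> cle z x \<and> z \<noteq> x}. mu \<one> z)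
        = - moebius_formula x"
      by simp
    then show ?thesis
      using is_moebius_cox_le False less.prems one_cox_le[OF less.prems] unfolding is_moebius_def
      by simp
  qed
qed

end

theorem mainTheorem13:
  fixes G :: "('a, 'b) monoid_scheme" and S :: "'a set" and v :: 'a
  assumes "coxeter_system G S" and "v \<in> carrier G"
  shows "(\<Sum>x \<in> {x \<in> carrier G. cox_le G S x v}.
            smult (moebius (carrier G) (cox_le G S) \<one>\<^bsub>G\<^esub> x)
                  ([:0, 1:] ^ card (cox_support G S x)))
         = [:1, -1:] ^ card (descents G S v)"
proof -
  have "group G" using assms(1) by (simp add: coxeter_system_def)
  then interpret coxeter G S
    by (rule coxeter.intro) (rule coxeter_axioms.intro[OF assms(1)])
  have "(\<Sum>x \<in> {x \<in> carrier G. cox_le G S x v}.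
          smult (moebius (carrier G) (cox_le G S) \<one>\<^bsub>G\<^esub> x) ([:0, 1:] ^ card (cox_support G S x)))
      = (\<Sum>x \<in> {x \<in> carrier G. cox_le G S x v}.
          smult (moebius_formula x) ([:0, 1:] ^ card (cox_support G S x)))"
    by (rule sum.cong) (simp_all add: moebius_one_eq_moebius_formula)
  also have "\<dots> = [:1, -1:] ^ card (descents G S v)"
    by (rule sum_cox_le_moebius_formula[OF assms(2)])
  finally show ?thesis .
qed

end
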